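(* Assume the standing $J$-self-adjoint setting. Assume also that $A_0$ and $A_1$ are bounded, that $d=\mathrm{dist}(\mathrm{spec}(A_0),\mathrm{spec}(A_1))>0$, and that $\|V\|<d/2$. Then $\mathrm{spec}(L)\subset\mathbb R$.
   Context: Standing $J$-self-adjoint setting: - $A_0$ and $A_1$ are self-adjoint operators on Hilbert spaces $\mathfrak H_0$ and $\mathfrak H_1$. - $B\in\mathcal B(\mathfrak H_1,\mathfrak H_0)$. - $\mathfrak H=\mathfrak H_0\oplus\mathfrak H_1$, $A=\mathrm{diag}(A_0,A_1)$, and $V=\begin{pmatrix}0&B\\-B^*&0\end{pmatrix}$. - $L=A+V$, i.e. $L(x_0\oplus x_1)=(A_0x_0+Bx_1)\oplus(-B^*x_0+A_1x_1)$. *)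

theory Defs
  imports "HOL-Analysis.Analysis"
begin

class complex_normed = real_normed_vector +
  fixes scaleC :: "complex \<Rightarrow> 'a \<Rightarrow> 'a"
  assumes scaleC_add_right: "scaleC a (x + y) = scaleC a x + scaleC a y"
    and scaleC_add_left: "scaleC (a + b) x = scaleC a x + scaleC b x"
    and scaleC_scaleC: "scaleC a (scaleC b x) = scaleC (a * b) x"
    and scaleC_one: "scaleC 1 x = x"
    and scaleR_scaleC: "scaleR r x = scaleC (complex_of_real r) x"
    and norm_scaleC: "norm (scaleC a x) = cmod a * norm x"

class complex_inner = complex_normed +
  fixes cinner :: "'a \<Rightarrow> 'a \<Rightarrow> complex"
  assumes cinner_commute: "cinner x y = cnj (cinner y x)"
    and cinner_add_left: "cinner (x + y) z = cinner x z + cinner y z"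
    and cinner_scaleC_left: "cinner (scaleC r x) y = cnj r * cinner x y"
    and cinner_real_nonneg: "cinner x x \<in> \<real> \<and> 0 \<le> Re (cinner x x)"
    and cinner_zero_iff: "cinner x x = 0 \<longleftrightarrow> x = 0"
    and norm_eq_sqrt_cinner: "norm x = sqrt (Re (cinner x x))"

class chilbert = complex_inner + complete_space

instantiation complex :: chilbert
begin
definition scaleC_complex_def: "scaleC a (x::complex) = a * x"
definition cinner_complex_def: "cinner (x::complex) y = cnj x * y"
instance
proof
  fix x y :: complex and a b :: complex and r :: real
  show "scaleC a (x + y) = scaleC a x + scaleC a y" by (simp add: scaleC_complex_def algebra_simps)
  show "scaleC (a + b) x = scaleC a x + scaleC b x" by (simp add: scaleC_complex_def algebra_simps)
  show "scaleC a (scaleC b x) = scaleC (a * b) x" by (simp add: scaleC_complex_def)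
  show "scaleC 1 x = x" by (simp add: scaleC_complex_def)
  show "scaleR r x = scaleC (complex_of_real r) x" by (simp add: scaleC_complex_def scaleR_conv_of_real)
  show "norm (scaleC a x) = cmod a * norm x" by (simp add: scaleC_complex_def norm_mult)
  show "cinner x y = cnj (cinner y x)" by (simp add: cinner_complex_def)
  fix z :: complex
  show "cinner (x + y) z = cinner x z + cinner y z" by (simp add: cinner_complex_def algebra_simps)
  show "cinner (scaleC a x) y = cnj a * cinner x y" by (simp add: cinner_complex_def scaleC_complex_def)
  show "cinner x x \<in> \<real> \<and> 0 \<le> Re (cinner x x)"
    by (simp add: cinner_complex_def mult.commute[of "cnj x"] complex_mult_cnj del: complex_cnj_mult)
  show "cinner x x = 0 \<longleftrightarrow> x = 0" by (simp add: cinner_complex_def)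
  show "norm x = sqrt (Re (cinner x x))"
    by (simp add: cinner_complex_def cmod_def power2_eq_square)
qed
end

text \<open>Orthogonal direct sum \<open>H0 \<oplus> H1\<close>: the product type with componentwise complex
  scaling; its norm (from HOL-Analysis) is \<open>sqrt (norm x0^2 + norm x1^2)\<close>.\<close>
instantiation prod :: (complex_normed, complex_normed) complex_normed
begin
definition scaleC_prod_def: "scaleC a x = (scaleC a (fst x), scaleC a (snd x))"
instance
proof
  fix x y :: "'a \<times> 'b" and a b :: complex and r :: real
  show "scaleC a (x + y) = scaleC a x + scaleC a y"
    by (simp add: scaleC_prod_def scaleC_add_right)
  show "scaleC (a + b) x = scaleC a x + scaleC b x"
    by (simp add: scaleC_prod_def scaleC_add_left)
  show "scaleC a (scaleC b x) = scaleC (a * b) x" by (simp add: scaleC_prod_def scaleC_scaleC)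
  show "scaleC 1 x = x" by (simp add: scaleC_prod_def scaleC_one)
  show "scaleR r x = scaleC (complex_of_real r) x"
    by (simp add: scaleC_prod_def scaleR_prod_def scaleR_scaleC)
  have "sqrt ((cmod a * norm (fst x))\<^sup>2 + (cmod a * norm (snd x))\<^sup>2)
        = cmod a * sqrt ((norm (fst x))\<^sup>2 + (norm (snd x))\<^sup>2)"
    by (simp add: power_mult_distrib distrib_left[symmetric] real_sqrt_mult)
  then show "norm (scaleC a x) = cmod a * norm x"
    by (simp add: scaleC_prod_def norm_prod_def norm_scaleC)
qed
end

definition bounded_clinear :: "('a::complex_normed \<Rightarrow> 'b::complex_normed) \<Rightarrow> bool" where
  "bounded_clinear f \<longleftrightarrow>
     (\<forall>x y. f (x + y) = f x + f y) \<and> (\<forall>c x. f (scaleC c x) = scaleC c (f x)) \<and>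
     (\<exists>K. \<forall>x. norm (f x) \<le> norm x * K)"

definition bounded_selfadjoint :: "('a::chilbert \<Rightarrow> 'a) \<Rightarrow> bool" where
  "bounded_selfadjoint T \<longleftrightarrow> bounded_clinear T \<and> (\<forall>x y. cinner (T x) y = cinner x (T y))"

definition is_adjoint :: "('a::chilbert \<Rightarrow> 'b::chilbert) \<Rightarrow> ('b \<Rightarrow> 'a) \<Rightarrow> bool" where
  "is_adjoint T T' \<longleftrightarrow> (\<forall>x y. cinner (T x) y = cinner x (T' y))"

definition cspec :: "('a::complex_normed \<Rightarrow> 'a) \<Rightarrow> complex set" where
  "cspec T = {z. \<not> (\<exists>S. bounded_clinear S \<and>
                      (\<forall>x. S (T x - scaleC z x) = x) \<and>
                      (\<forall>y. T (S y) - scaleC z (S y) = y))}"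

definition blockV :: "('b \<Rightarrow> 'a) \<Rightarrow> ('a \<Rightarrow> 'b) \<Rightarrow> ('a::chilbert \<times> 'b::chilbert \<Rightarrow> 'a \<times> 'b)" where
  "blockV B Bs = (\<lambda>(x0, x1). (B x1, - Bs x0))"

definition blockL :: "('a \<Rightarrow> 'a) \<Rightarrow> ('b \<Rightarrow> 'b) \<Rightarrow> ('b \<Rightarrow> 'a) \<Rightarrow> ('a \<Rightarrow> 'b)
                        \<Rightarrow> ('a::chilbert \<times> 'b::chilbert \<Rightarrow> 'a \<times> 'b)" where
  "blockL A0 A1 B Bs = (\<lambda>(x0, x1). (A0 x0 + B x1, - Bs x0 + A1 x1))"

end

theory Submission
  imports Defs
begin

text \<open>
  Let \<open>z = \<mu> + i \<nu>\<close> with \<open>\<nu> \<noteq> 0\<close>.  For a self-adjoint operator the best lower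
  bound \<open>m\<close> of \<open>A - \<mu>\<close> is attained as the distance from \<open>\<mu>\<close> to a spectral point \<open>\<mu> \<pm> m\<close>
  (spectral gap lemma, via Cauchy--Schwarz applied to the positive operator
  \<open>(A - \<mu>)\<^sup>2 - m\<^sup>2\<close>); hence the lower bounds \<open>m0, m1\<close> of \<open>A0 - \<mu>, A1 - \<mu>\<close> satisfy
  \<open>d \<le> m0 + m1\<close>.  Since \<open>L\<close> is \<open>J\<close>-self-adjoint for \<open>J = diag(1, -1)\<close>, the imaginary part of
  \<open>[(L - z) x, x]\<close> controls \<open>\<bar>\<parallel>x0\<parallel> - \<parallel>x1\<parallel>\<bar>\<close>; together with the diagonal estimates this gives
  a lower bound \<open>c > 0\<close> for \<open>L - (\<mu> + i t)\<close>, uniform in \<open>|t| \<ge> |\<nu>|\<close>.  Finally \<open>L - z\<close> is onto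
  far out on the vertical ray, and surjectivity propagates down the ray in steps of size
  \<open>c/2\<close> (Banach fixed point theorem); a bijective map bounded below has a bounded inverse.
\<close>

lemma scaleC_zero_left [simp]: "scaleC 0 (x::'a::complex_normed) = 0"
  by (metis of_real_0 scaleR_scaleC scaleR_zero_left)

lemma scaleC_zero_right [simp]: "scaleC a (0::'a::complex_normed) = 0"
  using scaleC_add_right[of a "0::'a" 0] by simp

lemma scaleC_minus_left: "scaleC (- a) (x::'a::complex_normed) = - scaleC a x"
  using scaleC_add_left[of "-a" a x] by (simp add: eq_neg_iff_add_eq_0)

lemma scaleC_minus_right: "scaleC a (- x::'a::complex_normed) = - scaleC a x"
  using scaleC_add_right[of a "-x" x] by (simp add: eq_neg_iff_add_eq_0)

lemma scaleC_diff_right: "scaleC a (x - y::'a::complex_normed) = scaleC a x - scaleC a y"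
  by (simp only: diff_conv_add_uminus scaleC_add_right scaleC_minus_right)

lemma scaleC_diff_left: "scaleC (a - b) (x::'a::complex_normed) = scaleC a x - scaleC b x"
  by (simp only: diff_conv_add_uminus scaleC_add_left scaleC_minus_left)

lemma cinner_zero_left [simp]: "cinner 0 (y::'a::complex_inner) = 0"
  using cinner_add_left[of "0::'a" 0 y] by simp

lemma cinner_add_right: "cinner (z::'a::complex_inner) (x + y) = cinner z x + cinner z y"
  by (subst (1 2 3) cinner_commute) (simp add: cinner_add_left)

lemma cinner_scaleC_right: "cinner (y::'a::complex_inner) (scaleC r x) = r * cinner y x"
  by (subst (1 2) cinner_commute) (simp add: cinner_scaleC_left)

lemma cinner_minus_left: "cinner (- x) (y::'a::complex_inner) = - cinner x y"
  using cinner_add_left[of "-x" x y] by (simp add: eq_neg_iff_add_eq_0)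

lemma cinner_minus_right: "cinner (y::'a::complex_inner) (- x) = - cinner y x"
  by (subst (1 2) cinner_commute) (simp add: cinner_minus_left)

lemma cinner_diff_left: "cinner (x - z) (y::'a::complex_inner) = cinner x y - cinner z y"
  by (simp only: diff_conv_add_uminus cinner_add_left cinner_minus_left)

lemma cinner_diff_right: "cinner (y::'a::complex_inner) (x - z) = cinner y x - cinner y z"
  by (simp only: diff_conv_add_uminus cinner_add_right cinner_minus_right)

lemmas cinner_simps = cinner_add_left cinner_add_right cinner_diff_left cinner_diff_right
  cinner_minus_left cinner_minus_right cinner_scaleC_left cinner_scaleC_right

lemma cinner_self: "cinner (x::'a::complex_inner) x = complex_of_real ((norm x)\<^sup>2)"
proof -
  have real: "cinner x x \<in> \<real>" and nonneg: "0 \<le> Re (cinner x x)"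
    using cinner_real_nonneg by auto
  have "(norm x)\<^sup>2 = Re (cinner x x)"
    using norm_eq_sqrt_cinner[of x] nonneg by simp
  with real show ?thesis by (metis Reals_cases Re_complex_of_real)
qed

lemma symmetric_form_real:
  fixes T :: "'a::complex_inner \<Rightarrow> 'a"
  assumes "\<And>x y. cinner (T x) y = cinner x (T y)"
  shows "cinner x (T x) = complex_of_real (Re (cinner x (T x)))"
proof -
  have "cinner x (T x) = cnj (cinner x (T x))" by (metis assms cinner_commute)
  then have "Im (cinner x (T x)) = 0" by (metis cnj.sel(2) neg_equal_zero)
  then show ?thesis by (simp add: complex_eq_iff)
qed

definition clin :: "('a::complex_normed \<Rightarrow> 'b::complex_normed) \<Rightarrow> bool" where
  "clin f \<longleftrightarrow> (\<forall>x y. f (x + y) = f x + f y) \<and> (\<forall>c x. f (scaleC c x) = scaleC c (f x))"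

lemma clin_add: "clin f \<Longrightarrow> f (x + y) = f x + f y"
  by (simp add: clin_def)

lemma clin_scaleC: "clin f \<Longrightarrow> f (scaleC c x) = scaleC c (f x)"
  by (simp add: clin_def)

lemma clin_zero: "clin f \<Longrightarrow> f 0 = 0"
  using clin_scaleC[of f 0 0] by simp

lemma clin_minus: "clin f \<Longrightarrow> f (- x) = - f x"
  by (metis clin_add clin_zero eq_neg_iff_add_eq_0)

lemma clin_diff: "clin f \<Longrightarrow> f (x - y) = f x - f y"
  by (simp only: diff_conv_add_uminus clin_add clin_minus)

lemma clin_scaleR: "clin f \<Longrightarrow> f (scaleR r x) = scaleR r (f x)"
  by (simp add: scaleR_scaleC clin_scaleC)

lemma clin_id: "clin (\<lambda>x. x)"
  by (simp add: clin_def)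

lemma clin_shift: "clin A \<Longrightarrow> clin (\<lambda>y. A y - scaleC c y)"
  unfolding clin_def by (simp add: scaleC_add_right scaleC_scaleC mult.commute scaleC_diff_right)

lemma bounded_clinear_clin: "bounded_clinear f \<Longrightarrow> clin f"
  by (simp add: bounded_clinear_def clin_def)

lemma bounded_clinear_bound:
  fixes f :: "'a::complex_normed \<Rightarrow> 'b::complex_normed"
  assumes "bounded_clinear f"
  obtains K where "0 \<le> K" and "\<And>x. norm (f x) \<le> K * norm x"
proof -
  obtain K where K: "\<And>x. norm (f x) \<le> norm x * K"
    using assms by (auto simp: bounded_clinear_def)
  have "norm (f x) \<le> max K 0 * norm x" for x
    using K[of x] mult_left_mono[of K "max K 0" "norm x"] by (simp add: mult.commute)
  then show thesis by (rule that[of "max K 0", OF max.cobounded2])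
qed

lemma selfadjoint_clin: "bounded_selfadjoint A \<Longrightarrow> clin A"
  by (simp add: bounded_selfadjoint_def bounded_clinear_clin)

lemma selfadjoint_symmetric: "bounded_selfadjoint A \<Longrightarrow> cinner (A x) y = cinner x (A y)"
  by (simp add: bounded_selfadjoint_def)

subsection \<open>The Cauchy--Schwarz inequality for positive forms\<close>

lemma nonneg_quadratic_bound:
  fixes a b W :: real
  assumes "0 \<le> W" "0 \<le> a" "0 \<le> b" and nonneg: "\<And>t. 0 \<le> a - 2*t*W + t\<^sup>2*W*b"
  shows "W \<le> a*b"
proof (cases "b > 0")
  case True
  have "0 \<le> a - 2*(1/b)*W + (1/b)\<^sup>2*W*b" by (rule nonneg)
  also have "\<dots> = a - W/b" using True by (simp add: field_simps power2_eq_square)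
  finally show ?thesis using True by (simp add: field_simps)
next
  case False
  with assms have "b = 0" by simp
  show ?thesis
  proof (rule ccontr)
    assume "\<not> W \<le> a*b"
    with \<open>b = 0\<close> have "W > 0" by simp
    have "0 \<le> a - 2*((a+1)/(2*W))*W + ((a+1)/(2*W))\<^sup>2*W*b" by (rule nonneg)
    also have "\<dots> = -1" using \<open>W > 0\<close> \<open>b = 0\<close> by (simp add: field_simps)
    finally show False by simp
  qed
qed

text \<open>Cauchy--Schwarz for the semi-inner product \<open>\<langle>u, S v\<rangle>\<close> of a positive symmetric \<open>S\<close>;
  it is applied both to the identity and to positive operators built from \<open>A - \<mu>\<close>.\<close>
lemma positive_form_cauchy_schwarz:
  fixes S :: "'a::complex_inner \<Rightarrow> 'a"
  assumes lin: "clin S" and sym: "\<And>x y. cinner (S x) y = cinner x (S y)"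
    and pos: "\<And>x. 0 \<le> Re (cinner x (S x))"
  shows "(cmod (cinner u (S v)))\<^sup>2 \<le> Re (cinner u (S u)) * Re (cinner v (S v))"
proof -
  define w where "w = cinner u (S v)"
  define a where "a = Re (cinner u (S u))"
  define b where "b = Re (cinner v (S v))"
  have cvu: "cinner v (S u) = cnj w"
    unfolding w_def by (metis sym cinner_commute)
  have wsq: "w * cnj w = complex_of_real ((cmod w)\<^sup>2)"
    by (metis complex_norm_square)
  have "0 \<le> a - 2*t*(cmod w)\<^sup>2 + t\<^sup>2*(cmod w)\<^sup>2*b" for t :: real
  proof -
    define k where "k = complex_of_real t * cnj w"
    define x where "x = u - scaleC k v"
    have "cinner x (S x) = cinner u (S u) - k * cinner u (S v) - cnj k * cinner v (S u)
        + cnj k * k * cinner v (S v)"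
      unfolding x_def using lin by (simp add: clin_diff clin_scaleC cinner_simps algebra_simps)
    also have "\<dots> = complex_of_real a - 2 * complex_of_real t * (w * cnj w)
        + (complex_of_real t)\<^sup>2 * (w * cnj w) * complex_of_real b"
      unfolding k_def cvu w_def[symmetric] a_def b_def
      using symmetric_form_real[OF sym, of u] symmetric_form_real[OF sym, of v]
      by (simp add: algebra_simps power2_eq_square)
    also have "\<dots> = complex_of_real (a - 2*t*(cmod w)\<^sup>2 + t\<^sup>2*(cmod w)\<^sup>2*b)"
      unfolding wsq by simp
    finally show ?thesis using pos[of x] by simp
  qed
  moreover have "0 \<le> a" "0 \<le> b" using pos unfolding a_def b_def by auto
  ultimately have "(cmod w)\<^sup>2 \<le> a * b" by (intro nonneg_quadratic_bound) auto
  then show ?thesis unfolding w_def a_def b_def .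
qed

lemma cinner_cauchy_schwarz: "cmod (cinner (x::'a::complex_inner) y) \<le> norm x * norm y"
proof -
  have "(cmod (cinner x y))\<^sup>2 \<le> Re (cinner x x) * Re (cinner y y)"
    using positive_form_cauchy_schwarz[OF clin_id, of x y] by (simp add: cinner_self)
  also have "\<dots> = (norm x * norm y)\<^sup>2" by (simp add: cinner_self power_mult_distrib)
  finally show ?thesis by (rule power2_le_imp_le) simp
qed

subsection \<open>Criteria for membership in the spectrum\<close>

definition approx_eigenvalue :: "('a::complex_normed \<Rightarrow> 'a) \<Rightarrow> complex \<Rightarrow> bool" where
  "approx_eigenvalue T z \<longleftrightarrow> (\<forall>e>0. \<exists>x. x \<noteq> 0 \<and> norm (T x - scaleC z x) < e * norm x)"

text \<open>Approximate eigenvalues belong to the spectrum: a bounded left inverse of \<open>T - z\<close>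
  would force \<open>T - z\<close> to be bounded below.\<close>
lemma approx_eigenvalue_in_cspec:
  fixes T :: "'a::complex_normed \<Rightarrow> 'a"
  assumes "approx_eigenvalue T z"
  shows "z \<in> cspec T"
proof -
  have "\<not> (\<exists>S. bounded_clinear S \<and> (\<forall>x. S (T x - scaleC z x) = x))"
  proof
    assume "\<exists>S. bounded_clinear S \<and> (\<forall>x. S (T x - scaleC z x) = x)"
    then obtain S where S: "bounded_clinear S" "\<And>x. S (T x - scaleC z x) = x" by blast
    obtain K where K: "K \<ge> 0" "\<And>x. norm (S x) \<le> K * norm x"
      using bounded_clinear_bound[OF S(1)] by blast
    obtain x where x: "x \<noteq> 0" "norm (T x - scaleC z x) < (1/(K+1)) * norm x"
      using assms K(1) unfolding approx_eigenvalue_def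
      by (metis add_nonneg_pos zero_less_divide_1_iff zero_less_one)
    have "norm x = norm (S (T x - scaleC z x))" using S(2) by simp
    also have "\<dots> \<le> K * norm (T x - scaleC z x)" by (rule K(2))
    also have "\<dots> \<le> K * ((1/(K+1)) * norm x)" using x(2) K(1) by (intro mult_left_mono) auto
    also have "\<dots> = (K/(K+1)) * norm x" by simp
    also have "\<dots> < 1 * norm x" using x(1) K(1) by (intro mult_strict_right_mono) auto
    finally show False by simp
  qed
  then show ?thesis unfolding cspec_def by blast
qed

lemma approx_eigenvalue_of_product:
  fixes T :: "'a::complex_normed \<Rightarrow> 'a"
  assumes lin: "clin T"
    and small: "\<And>d. d > 0 \<Longrightarrow> \<exists>y. y \<noteq> 0 \<and>
                  norm (T (T y - scaleC b y) - scaleC a (T y - scaleC b y)) < d * norm y"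
  shows "approx_eigenvalue T a \<or> approx_eigenvalue T b"
proof (rule disjCI)
  assume "\<not> approx_eigenvalue T b"
  then obtain d where d: "d > 0" "\<And>y. y \<noteq> 0 \<Longrightarrow> d * norm y \<le> norm (T y - scaleC b y)"
    unfolding approx_eigenvalue_def by (auto simp: not_less)
  show "approx_eigenvalue T a"
    unfolding approx_eigenvalue_def
  proof (intro allI impI)
    fix e :: real assume "e > 0"
    then obtain y where y: "y \<noteq> 0"
      and Qy: "norm (T (T y - scaleC b y) - scaleC a (T y - scaleC b y)) < (d*e) * norm y"
      using small[of "d*e"] d(1) by auto
    define w where "w = T y - scaleC b y"
    have w_big: "d * norm y \<le> norm w" using d(2)[OF y] by (simp add: w_def)
    then have "w \<noteq> 0" using d(1) y by (metis mult_pos_pos norm_zero not_le zero_less_norm_iff)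
    moreover have "norm (T w - scaleC a w) < e * norm w"
    proof -
      have "norm (T w - scaleC a w) < e * (d * norm y)" using Qy by (simp add: w_def algebra_simps)
      also have "\<dots> \<le> e * norm w" using w_big \<open>e > 0\<close> by (intro mult_left_mono) auto
      finally show ?thesis .
    qed
    ultimately show "\<exists>x. x \<noteq> 0 \<and> norm (T x - scaleC a x) < e * norm x" by blast
  qed
qed

lemma bounded_below_surj_not_in_cspec:
  fixes T :: "'a::complex_normed \<Rightarrow> 'a"
  assumes lin: "clin T" and surj: "surj (\<lambda>x. T x - scaleC z x)" and "c > 0"
    and below: "\<And>x. c * norm x \<le> norm (T x - scaleC z x)"
  shows "z \<notin> cspec T"
proof -
  define G where "G = (\<lambda>x. T x - scaleC z x)"
  have linG: "clin G" unfolding G_def by (rule clin_shift[OF lin])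
  have "inj G"
  proof (rule injI)
    fix x x' assume "G x = G x'"
    then have "G (x - x') = 0" using linG by (simp add: clin_diff)
    then have "c * norm (x - x') \<le> 0" using below[of "x - x'"] by (simp add: G_def)
    then show "x = x'" using \<open>c > 0\<close> by (simp add: mult_le_0_iff)
  qed
  define S where "S = inv G"
  have "surj G" using surj by (simp add: G_def)
  then have GS: "\<And>y. G (S y) = y" unfolding S_def by (rule surj_f_inv_f)
  have SG: "\<And>x. S (G x) = x" unfolding S_def using \<open>inj G\<close> by simp
  have "bounded_clinear S"
    unfolding bounded_clinear_def
  proof (intro conjI allI)
    show "S (a + b) = S a + S b" for a b
      using \<open>inj G\<close> by (rule injD) (simp add: GS clin_add[OF linG])
    show "S (scaleC k a) = scaleC k (S a)" for k a
      using \<open>inj G\<close> by (rule injD) (simp add: GS clin_scaleC[OF linG])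
    have "norm (S y) \<le> norm y * (1/c)" for y
      using below[of "S y"] GS[of y] \<open>c > 0\<close> by (simp add: G_def field_simps)
    then show "\<exists>K. \<forall>x. norm (S x) \<le> norm x * K" by blast
  qed
  with GS SG show ?thesis unfolding cspec_def G_def by blast
qed

text \<open>Stability of surjectivity: a map \<open>G\<close> that is onto and bounded below by \<open>c\<close> stays
  onto under a linear perturbation of norm \<open>k < c\<close> (Banach's fixed point theorem).\<close>
lemma surj_perturbation:
  fixes G P :: "'a::{complex_normed,complete_space} \<Rightarrow> 'a"
  assumes linG: "clin G" and surj: "surj G" and "c > 0" and below: "\<And>x. c * norm x \<le> norm (G x)"
    and linP: "clin P" and "0 \<le> k" "k < c" and small: "\<And>x. norm (P x) \<le> k * norm x"
  shows "surj (\<lambda>x. G x + P x)"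
  unfolding surj_def
proof
  fix y
  define R where "R = inv G"
  have GR: "\<And>y. G (R y) = y" unfolding R_def by (rule surj_f_inv_f[OF surj])
  define F where "F = (\<lambda>x. R (y - P x))"
  have "dist (F x) (F x') \<le> (k/c) * dist x x'" for x x'
  proof -
    have "G (F x - F x') = P (x' - x)"
      unfolding F_def using linG linP GR by (simp add: clin_diff)
    then have "c * norm (F x - F x') \<le> k * norm (x - x')"
      using below[of "F x - F x'"] small[of "x' - x"] by (simp add: norm_minus_commute)
    then show ?thesis using \<open>c > 0\<close> by (simp add: dist_norm field_simps)
  qed
  moreover have "0 \<le> k/c" "k/c < 1" using \<open>0 \<le> k\<close> \<open>k < c\<close> \<open>c > 0\<close> by auto
  ultimately obtain x where "F x = x" using banach_fix_type by blast
  then have "G x = y - P x" using GR unfolding F_def by metis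
  then show "\<exists>x. y = G x + P x" by (metis diff_add_cancel)
qed

subsection \<open>Bounded self-adjoint operators\<close>

lemma bounded_clinear_shift:
  assumes "bounded_clinear A"
  shows "bounded_clinear (\<lambda>y. A y - scaleC c y)"
proof -
  obtain K where K: "\<And>x. norm (A x) \<le> K * norm x"
    using bounded_clinear_bound[OF assms] by blast
  have "norm (A x - scaleC c x) \<le> norm x * (K + cmod c)" for x
    using norm_triangle_ineq4[of "A x" "scaleC c x"] K[of x]
    by (simp add: norm_scaleC algebra_simps)
  with clin_shift[OF bounded_clinear_clin[OF assms]] show ?thesis
    unfolding bounded_clinear_def clin_def by blast
qed

lemma selfadjoint_shift:
  assumes "bounded_selfadjoint A"
  shows "bounded_selfadjoint (\<lambda>y. A y - scaleC (complex_of_real \<mu>) y)"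
  using assms bounded_clinear_shift[of A] unfolding bounded_selfadjoint_def
  by (simp add: cinner_simps)

lemma cspec_shift: "z \<in> cspec (\<lambda>y. A y - scaleC c y) \<longleftrightarrow> c + z \<in> cspec A"
proof -
  have "A x - scaleC c x - scaleC z x = A x - scaleC (c + z) x" for x
    by (simp add: scaleC_add_left diff_diff_eq)
  then show ?thesis unfolding cspec_def by (simp only: mem_Collect_eq)
qed

definition min_modulus :: "('a::complex_normed \<Rightarrow> 'b::complex_normed) \<Rightarrow> real" where
  "min_modulus T = Inf {norm (T y) / norm y | y. y \<noteq> 0}"

lemma min_modulus_le: "min_modulus T * norm y \<le> norm (T y)"
proof (cases "y = 0")
  case False
  have "bdd_below {norm (T y) / norm y | y. y \<noteq> 0}"
    by (rule bdd_belowI[of _ 0]) auto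
  then have "min_modulus T \<le> norm (T y) / norm y"
    unfolding min_modulus_def using False by (intro cInf_lower) auto
  then show ?thesis using False by (simp add: field_simps)
qed simp

lemma min_modulus_nonneg:
  assumes "\<exists>y::'a. y \<noteq> 0"
  shows "0 \<le> min_modulus (T :: 'a::complex_normed \<Rightarrow> 'b::complex_normed)"
  unfolding min_modulus_def using assms by (intro cInf_greatest) auto

lemma min_modulus_approx:
  fixes T :: "'a::complex_normed \<Rightarrow> 'b::complex_normed"
  assumes "\<exists>y::'a. y \<noteq> 0" and "e > 0"
  shows "\<exists>y. y \<noteq> 0 \<and> norm (T y) < (min_modulus T + e) * norm y"
proof -
  let ?X = "{norm (T y) / norm y | y. y \<noteq> 0}"
  have ne: "?X \<noteq> {}" using assms(1) by blast
  have bdd: "bdd_below ?X" by (rule bdd_belowI[of _ 0]) auto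
  have "Inf ?X < min_modulus T + e" using assms(2) unfolding min_modulus_def by simp
  then obtain r where "r \<in> ?X" "r < min_modulus T + e"
    unfolding cInf_less_iff[OF ne bdd] by blast
  then obtain y where "y \<noteq> 0" "norm (T y) / norm y < min_modulus T + e" by blast
  then show ?thesis by (auto simp: field_simps)
qed

text \<open>For a positive symmetric operator \<open>Q\<close> with bound \<open>K\<close>, Cauchy--Schwarz for the form
  \<open>\<langle>u, Q v\<rangle>\<close> gives \<open>\<parallel>Q y\<parallel>\<^sup>4 = |\<langle>y, Q (Q y)\<rangle>|\<^sup>2 \<le> \<langle>y, Q y\<rangle> \<langle>Q y, Q\<^sup>2 y\<rangle> \<le> \<langle>y, Q y\<rangle> K\<^sup>3 \<parallel>y\<parallel>\<^sup>2\<close>.\<close>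
lemma positive_operator_fourth_power:
  fixes Q :: "'a::complex_inner \<Rightarrow> 'a"
  assumes lin: "clin Q" and sym: "\<And>x y. cinner (Q x) y = cinner x (Q y)"
    and pos: "\<And>x. 0 \<le> Re (cinner x (Q x))"
    and "0 \<le> K" and bound: "\<And>x. norm (Q x) \<le> K * norm x"
  shows "(norm (Q y))^4 \<le> Re (cinner y (Q y)) * (K^3 * (norm y)\<^sup>2)"
proof -
  have form_QQ: "Re (cinner (Q y) (Q (Q y))) \<le> K^3 * (norm y)\<^sup>2"
  proof -
    have "Re (cinner (Q y) (Q (Q y))) \<le> norm (Q y) * norm (Q (Q y))"
      using complex_Re_le_cmod cinner_cauchy_schwarz order_trans by blast
    also have "\<dots> \<le> (K * norm y) * (K * (K * norm y))"
      using bound[of y] bound[of "Q y"] \<open>0 \<le> K\<close>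
      by (intro mult_mono) (auto intro: order_trans mult_left_mono)
    finally show ?thesis by (simp add: power2_eq_square power3_eq_cube algebra_simps)
  qed
  have "cinner y (Q (Q y)) = complex_of_real ((norm (Q y))\<^sup>2)" by (metis sym cinner_self)
  then have "(norm (Q y))^4 = (cmod (cinner y (Q (Q y))))\<^sup>2"
    by (simp only: norm_of_real) (simp add: power_mult_distrib[symmetric] power_even_eq)
  also have "\<dots> \<le> Re (cinner y (Q y)) * Re (cinner (Q y) (Q (Q y)))"
    by (rule positive_form_cauchy_schwarz[OF lin sym pos])
  also have "\<dots> \<le> Re (cinner y (Q y)) * (K^3 * (norm y)\<^sup>2)"
    using form_QQ pos[of y] by (rule mult_left_mono)
  finally show ?thesis .
qed

lemma positive_operator_not_bounded_below:
  fixes Q :: "'a::complex_inner \<Rightarrow> 'a"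
  assumes lin: "clin Q" and sym: "\<And>x y. cinner (Q x) y = cinner x (Q y)"
    and pos: "\<And>x. 0 \<le> Re (cinner x (Q x))"
    and "0 \<le> K" and bound: "\<And>x. norm (Q x) \<le> K * norm x"
    and small: "\<And>e. e > 0 \<Longrightarrow> \<exists>y. y \<noteq> 0 \<and> Re (cinner y (Q y)) \<le> e * (norm y)\<^sup>2"
    and "d > 0"
  shows "\<exists>y. y \<noteq> 0 \<and> norm (Q y) < d * norm y"
proof -
  define e where "e = d^4 / (2 * (K^3 + 1))"
  have "e > 0" using \<open>d > 0\<close> \<open>0 \<le> K\<close> by (simp add: e_def add_nonneg_pos)
  then obtain y where y: "y \<noteq> 0" and form_small: "Re (cinner y (Q y)) \<le> e * (norm y)\<^sup>2"
    using small by blast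
  have "e * K^3 < d^4"
  proof -
    have ratio: "u / (2 * (u + 1)) < 1" if "0 \<le> u" for u :: real
      using that by simp
    have "e * K^3 = d^4 * (K^3 / (2 * (K^3 + 1)))" by (simp add: e_def)
    also have "\<dots> < d^4 * 1"
      using \<open>d > 0\<close> ratio[of "K^3"] \<open>0 \<le> K\<close> by (intro mult_strict_left_mono) simp_all
    finally show ?thesis by simp
  qed
  have "(norm (Q y))^4 \<le> Re (cinner y (Q y)) * (K^3 * (norm y)\<^sup>2)"
    by (rule positive_operator_fourth_power[OF lin sym pos \<open>0 \<le> K\<close> bound])
  also have "\<dots> \<le> (e * (norm y)\<^sup>2) * (K^3 * (norm y)\<^sup>2)"
    using form_small \<open>0 \<le> K\<close> by (intro mult_right_mono) simp_all
  also have "\<dots> = (e * K^3) * (norm y)^4" by (simp add: algebra_simps power2_eq_square power4_eq_xxxx)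
  also have "\<dots> < d^4 * (norm y)^4" using \<open>e * K^3 < d^4\<close> y by (intro mult_strict_right_mono) auto
  finally have "(norm (Q y))^4 < (d * norm y)^4" by (simp add: power_mult_distrib)
  then have "norm (Q y) < d * norm y"
    by (rule power_less_imp_less_base) (use \<open>d > 0\<close> in simp)
  with y show ?thesis by blast
qed

lemma min_modulus_approx_squared:
  fixes T :: "'a::complex_normed \<Rightarrow> 'b::complex_normed"
  assumes nontriv: "\<exists>y::'a. y \<noteq> 0" and "e > 0"
  shows "\<exists>y. y \<noteq> 0 \<and> (norm (T y))\<^sup>2 - (min_modulus T)\<^sup>2 * (norm y)\<^sup>2 \<le> e * (norm y)\<^sup>2"
proof -
  define m where "m = min_modulus T"
  have "0 \<le> m" unfolding m_def by (rule min_modulus_nonneg[OF nontriv])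
  define e' where "e' = min 1 (e / (2*m + 1))"
  have "0 < e'" "e' \<le> 1" using \<open>e > 0\<close> \<open>0 \<le> m\<close> by (auto simp: e'_def)
  have "(2*m + 1) * e' \<le> (2*m + 1) * (e / (2*m + 1))"
    using \<open>0 \<le> m\<close> by (intro mult_left_mono) (auto simp: e'_def)
  then have e'_le: "(2*m + 1) * e' \<le> e" using \<open>0 \<le> m\<close> by simp
  obtain y where "y \<noteq> 0" and y: "norm (T y) < (m + e') * norm y"
    using min_modulus_approx[OF nontriv \<open>0 < e'\<close>] unfolding m_def by blast
  have "(norm (T y))\<^sup>2 \<le> (m + e')\<^sup>2 * (norm y)\<^sup>2"
    using y by (metis norm_ge_zero order_less_imp_le power_mono power_mult_distrib)
  moreover have "(m + e')\<^sup>2 - m\<^sup>2 \<le> e"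
  proof -
    have "(m + e')\<^sup>2 - m\<^sup>2 = (2*m + e') * e'" by (simp add: power2_eq_square algebra_simps)
    also have "\<dots> \<le> (2*m + 1) * e'" using \<open>0 < e'\<close> \<open>e' \<le> 1\<close> by (intro mult_right_mono) auto
    finally show ?thesis using e'_le by linarith
  qed
  then have "((m + e')\<^sup>2 - m\<^sup>2) * (norm y)\<^sup>2 \<le> e * (norm y)\<^sup>2" by (intro mult_right_mono) auto
  ultimately show ?thesis using \<open>y \<noteq> 0\<close> unfolding m_def by (intro exI[of _ y]) (auto simp: algebra_simps)
qed

text \<open>Indeed \<open>Q = T\<^sup>2 - m\<^sup>2\<close> is positive with
  arbitrarily small quadratic form, so \<open>Q = (T - m)(T + m)\<close> is not bounded below.\<close>
lemma selfadjoint_min_modulus_in_cspec: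
  fixes T :: "'a::chilbert \<Rightarrow> 'a"
  assumes sa: "bounded_selfadjoint T" and nontriv: "\<exists>y::'a. y \<noteq> 0"
  shows "complex_of_real (min_modulus T) \<in> cspec T \<or> complex_of_real (- min_modulus T) \<in> cspec T"
proof -
  define m where "m = min_modulus T"
  have lin: "clin T" and sym: "\<And>x y. cinner (T x) y = cinner x (T y)"
    using sa by (auto simp: selfadjoint_clin selfadjoint_symmetric)
  obtain K where "0 \<le> K" and K: "\<And>x. norm (T x) \<le> K * norm x"
    using sa bounded_clinear_bound unfolding bounded_selfadjoint_def by blast
  define Q where "Q = (\<lambda>y. T (T y) - scaleC (complex_of_real (m\<^sup>2)) y)"
  have linQ: "clin Q" unfolding Q_def using lin by (intro clin_shift) (simp add: clin_def)
  have symQ: "\<And>x y. cinner (Q x) y = cinner x (Q y)" unfolding Q_def by (simp add: cinner_simps sym)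
  have formQ: "Re (cinner y (Q y)) = (norm (T y))\<^sup>2 - m\<^sup>2 * (norm y)\<^sup>2" for y
    unfolding Q_def by (simp add: cinner_simps cinner_self flip: sym)
  have posQ: "0 \<le> Re (cinner y (Q y))" for y
    using min_modulus_le[of T y] min_modulus_nonneg[OF nontriv, of T] unfolding formQ m_def
    by (simp add: power_mono flip: power_mult_distrib)
  have boundQ: "norm (Q x) \<le> (K\<^sup>2 + m\<^sup>2) * norm x" for x
  proof -
    have "norm (T (T x)) \<le> K * (K * norm x)"
      using K[of "T x"] K[of x] \<open>0 \<le> K\<close> by (meson mult_left_mono order_trans)
    moreover have "norm (Q x) \<le> norm (T (T x)) + m\<^sup>2 * norm x"
      using norm_triangle_ineq4[of "T (T x)" "scaleC (complex_of_real (m\<^sup>2)) x"]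
      by (simp add: Q_def norm_scaleC del: of_real_power)
    ultimately show ?thesis by (simp add: power2_eq_square algebra_simps)
  qed
  have smallQ: "\<exists>y. y \<noteq> 0 \<and> Re (cinner y (Q y)) \<le> e * (norm y)\<^sup>2" if "e > 0" for e
    using min_modulus_approx_squared[OF nontriv that, of T] by (simp add: formQ m_def)
  have "\<exists>y. y \<noteq> 0 \<and> norm (Q y) < d * norm y" if "d > 0" for d
    using positive_operator_not_bounded_below[OF linQ symQ posQ _ boundQ smallQ that] by simp
  moreover have "Q y = T (T y - scaleC (- m) y) - scaleC m (T y - scaleC (- m) y)" for y
    using lin by (simp add: Q_def clin_add clin_scaleC scaleC_minus_left scaleC_add_right
        scaleC_scaleC power2_eq_square)
  ultimately have "approx_eigenvalue T m \<or> approx_eigenvalue T (- m)"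
    by (intro approx_eigenvalue_of_product[OF lin]) simp
  then show ?thesis using approx_eigenvalue_in_cspec unfolding m_def by auto
qed

text \<open>An operator on the zero space has empty spectrum (the zero map inverts everything).\<close>
lemma nontrivial_of_cspec:
  assumes "cspec (A :: 'a::complex_normed \<Rightarrow> 'a) \<noteq> {}"
  shows "\<exists>x::'a. x \<noteq> 0"
proof (rule ccontr)
  assume "\<not> (\<exists>x::'a. x \<noteq> 0)"
  then have zero: "\<And>x::'a. x = 0" by blast
  have "bounded_clinear (\<lambda>y::'a. 0::'a)" by (auto simp: bounded_clinear_def intro: exI[of _ 0])
  moreover have "\<forall>x. (\<lambda>y::'a. 0::'a) (A x - scaleC z x) = x" for z :: complex
    using zero by metis
  moreover have "\<forall>y. A ((\<lambda>y::'a. 0::'a) y) - scaleC z ((\<lambda>y::'a. 0::'a) y) = y" for z :: complex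
    using zero by metis
  ultimately have "z \<notin> cspec A" for z unfolding cspec_def by blast
  with assms show False by blast
qed

lemma selfadjoint_spectral_gap:
  fixes A :: "'a::chilbert \<Rightarrow> 'a"
  assumes sa: "bounded_selfadjoint A" and nontriv: "\<exists>y::'a. y \<noteq> 0"
  obtains m r where "0 \<le> m" and "\<And>y. m * norm y \<le> norm (A y - scaleC (complex_of_real \<mu>) y)"
    and "\<bar>r\<bar> = m" and "complex_of_real (\<mu> + r) \<in> cspec A"
proof -
  define T where "T = (\<lambda>y. A y - scaleC (complex_of_real \<mu>) y)"
  define m where "m = min_modulus T"
  have "0 \<le> m" unfolding m_def by (rule min_modulus_nonneg[OF nontriv])
  have "bounded_selfadjoint T" unfolding T_def by (rule selfadjoint_shift[OF sa])
  then have "complex_of_real m \<in> cspec T \<or> complex_of_real (- m) \<in> cspec T"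
    unfolding m_def by (rule selfadjoint_min_modulus_in_cspec[OF _ nontriv])
  then obtain r where "\<bar>r\<bar> = m" "complex_of_real r \<in> cspec T"
    using \<open>0 \<le> m\<close> by (metis abs_minus_cancel abs_of_nonneg)
  moreover from this have "complex_of_real (\<mu> + r) \<in> cspec A"
    unfolding T_def cspec_shift by simp
  ultimately show thesis
    using that[OF \<open>0 \<le> m\<close>] min_modulus_le[of T] unfolding T_def m_def by blast
qed

lemma separated_spectra_lower_bounds:
  fixes A0 :: "'a::chilbert \<Rightarrow> 'a" and A1 :: "'b::chilbert \<Rightarrow> 'b"
  assumes sa0: "bounded_selfadjoint A0" and sa1: "bounded_selfadjoint A1"
    and sep: "setdist (cspec A0) (cspec A1) > 0"
  obtains m0 m1 where "0 \<le> m0" "0 \<le> m1" "setdist (cspec A0) (cspec A1) \<le> m0 + m1"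
    and "\<And>u. m0 * norm u \<le> norm (A0 u - scaleC (complex_of_real \<mu>) u)"
    and "\<And>u. m1 * norm u \<le> norm (A1 u - scaleC (complex_of_real \<mu>) u)"
proof -
  have "cspec A0 \<noteq> {}" "cspec A1 \<noteq> {}" using sep by auto
  then have "\<exists>x::'a. x \<noteq> 0" "\<exists>x::'b. x \<noteq> 0" by (auto intro: nontrivial_of_cspec)
  then obtain m0 r0 m1 r1 where "0 \<le> m0" "0 \<le> m1"
    and m0: "\<And>u. m0 * norm u \<le> norm (A0 u - scaleC (complex_of_real \<mu>) u)"
    and m1: "\<And>u. m1 * norm u \<le> norm (A1 u - scaleC (complex_of_real \<mu>) u)"
    and "\<bar>r0\<bar> = m0" "complex_of_real (\<mu> + r0) \<in> cspec A0"
    and "\<bar>r1\<bar> = m1" "complex_of_real (\<mu> + r1) \<in> cspec A1"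
    using selfadjoint_spectral_gap[OF sa0] selfadjoint_spectral_gap[OF sa1] by metis
  then have "setdist (cspec A0) (cspec A1) \<le> dist (complex_of_real (\<mu> + r0)) (complex_of_real (\<mu> + r1))"
    by (intro setdist_le_dist)
  also have "\<dots> = \<bar>r0 - r1\<bar>" by (simp add: dist_norm flip: of_real_diff)
  also have "\<dots> \<le> m0 + m1" using \<open>\<bar>r0\<bar> = m0\<close> \<open>\<bar>r1\<bar> = m1\<close> by linarith
  finally show thesis using that \<open>0 \<le> m0\<close> \<open>0 \<le> m1\<close> m0 m1 by blast
qed

text \<open>Moving a real spectral parameter off the real axis can only increase \<open>\<parallel>(A - z) x\<parallel>\<close>:
  \<open>\<parallel>(A - (\<mu> + i t)) x\<parallel>\<^sup>2 = \<parallel>(A - \<mu>) x\<parallel>\<^sup>2 + t\<^sup>2 \<parallel>x\<parallel>\<^sup>2\<close>.\<close>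
lemma selfadjoint_imaginary_shift:
  fixes A :: "'a::chilbert \<Rightarrow> 'a"
  assumes sa: "bounded_selfadjoint A"
  shows "norm (A x - scaleC (complex_of_real \<mu>) x) \<le> norm (A x - scaleC (Complex \<mu> t) x)"
proof -
  define u where "u = A x - scaleC (complex_of_real \<mu>) x"
  have ux: "cinner u x = cinner x u"
    unfolding u_def using sa by (simp add: cinner_simps selfadjoint_symmetric)
  have "Complex \<mu> t = complex_of_real \<mu> + \<i> * complex_of_real t" by (simp add: complex_eq_iff)
  then have eq: "A x - scaleC (Complex \<mu> t) x = u - scaleC (\<i> * complex_of_real t) x"
    unfolding u_def by (simp add: scaleC_add_left algebra_simps)
  have "cinner (u - scaleC (\<i> * complex_of_real t) x) (u - scaleC (\<i> * complex_of_real t) x)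
      = cinner u u + complex_of_real (t\<^sup>2) * cinner x x"
    by (simp add: cinner_simps ux algebra_simps power2_eq_square)
  then have "(norm (A x - scaleC (Complex \<mu> t) x))\<^sup>2 = (norm u)\<^sup>2 + t\<^sup>2 * (norm x)\<^sup>2"
    unfolding eq cinner_self by (metis Re_complex_of_real of_real_add of_real_mult)
  then have "(norm u)\<^sup>2 \<le> (norm (A x - scaleC (Complex \<mu> t) x))\<^sup>2" by simp
  then show ?thesis unfolding u_def by (rule power2_le_imp_le) simp
qed

lemma adjoint_bounded_clinear:
  fixes B :: "'b::chilbert \<Rightarrow> 'a::chilbert" and Bs :: "'a \<Rightarrow> 'b"
  assumes bB: "bounded_clinear B" and adj: "is_adjoint B Bs"
  shows "bounded_clinear Bs"
proof -
  have ad: "\<And>x y. cinner (B x) y = cinner x (Bs y)" using adj by (simp add: is_adjoint_def)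
  have nondeg: "\<And>u::'b. (\<And>x. cinner x u = 0) \<Longrightarrow> u = 0" using cinner_zero_iff by blast
  obtain K where "K \<ge> 0" and K: "\<And>x. norm (B x) \<le> K * norm x"
    using bounded_clinear_bound[OF bB] by blast
  show ?thesis unfolding bounded_clinear_def
  proof (intro conjI allI)
    have "Bs (a + c) - (Bs a + Bs c) = 0" for a c
      by (rule nondeg) (simp add: cinner_simps flip: ad)
    then show "Bs (a + c) = Bs a + Bs c" for a c by simp
    have "Bs (scaleC k a) - scaleC k (Bs a) = 0" for k a
      by (rule nondeg) (simp add: cinner_simps flip: ad)
    then show "Bs (scaleC k a) = scaleC k (Bs a)" for k a by simp
    have "norm (Bs y) \<le> norm y * K" for y
    proof -
      have "(norm (Bs y))\<^sup>2 = Re (cinner (B (Bs y)) y)" by (simp add: ad cinner_self)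
      also have "\<dots> \<le> norm (B (Bs y)) * norm y"
        using complex_Re_le_cmod cinner_cauchy_schwarz order_trans by blast
      also have "\<dots> \<le> (K * norm (Bs y)) * norm y" using K by (intro mult_right_mono) auto
      finally have "norm (Bs y) * norm (Bs y) \<le> norm (Bs y) * (norm y * K)"
        by (simp add: power2_eq_square algebra_simps)
      then show ?thesis using \<open>K \<ge> 0\<close> by (cases "norm (Bs y) = 0") (auto simp: mult_le_cancel_left)
    qed
    then show "\<exists>K. \<forall>x. norm (Bs x) \<le> norm x * K" by blast
  qed
qed

subsection \<open>Continuation of the resolvent along a vertical ray\<close>

text \<open>\<open>T - z\<close> is onto as soon as \<open>|z|\<close> exceeds a bound of \<open>T\<close>: perturb \<open>-z\<close> by \<open>T\<close>.\<close>
lemma surj_shift_large: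
  fixes T :: "'a::{complex_normed,complete_space} \<Rightarrow> 'a"
  assumes lin: "clin T" and "0 \<le> K" and bound: "\<And>x. norm (T x) \<le> K * norm x" and "K < cmod z"
  shows "surj (\<lambda>x. T x - scaleC z x)"
proof -
  have "z \<noteq> 0" using \<open>0 \<le> K\<close> \<open>K < cmod z\<close> by auto
  have linG: "clin (\<lambda>x::'a. - scaleC z x)"
    unfolding clin_def by (simp add: scaleC_add_right scaleC_scaleC mult.commute scaleC_minus_right)
  have "- scaleC z (- scaleC (1/z) y) = y" for y :: 'a
    using \<open>z \<noteq> 0\<close> by (simp add: scaleC_minus_right scaleC_scaleC scaleC_one)
  then have "surj (\<lambda>x::'a. - scaleC z x)" by (rule surjI)
  moreover have "cmod z * norm x \<le> norm (- scaleC z x)" for x :: 'a by (simp add: norm_scaleC)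
  ultimately have "surj (\<lambda>x. - scaleC z x + T x)"
    using \<open>0 \<le> K\<close> \<open>K < cmod z\<close> bound
    by (intro surj_perturbation[OF linG, where c = "cmod z" and k = K and P = T, OF _ _ _ lin]) auto
  then show ?thesis by (simp add: algebra_simps)
qed

lemma surj_shift_nearby:
  fixes T :: "'a::{complex_normed,complete_space} \<Rightarrow> 'a"
  assumes lin: "clin T" and surj: "surj (\<lambda>x. T x - scaleC z x)" and "c > 0"
    and below: "\<And>x. c * norm x \<le> norm (T x - scaleC z x)" and close: "cmod (z' - z) < c"
  shows "surj (\<lambda>x. T x - scaleC z' x)"
proof -
  have linP: "clin (\<lambda>x::'a. scaleC (z - z') x)"
    unfolding clin_def by (simp add: scaleC_add_right scaleC_scaleC mult.commute)
  have "norm (scaleC (z - z') x) \<le> cmod (z' - z) * norm x" for x :: 'a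
    by (simp add: norm_scaleC norm_minus_commute)
  then have "surj (\<lambda>x. (T x - scaleC z x) + scaleC (z - z') x)"
    using close by (intro surj_perturbation[OF clin_shift[OF lin] surj \<open>c > 0\<close> below linP,
        where k = "cmod (z' - z)"]) auto
  then show ?thesis by (simp add: scaleC_diff_left)
qed

text \<open>Far out on the ray
  \<open>T - z\<close> is onto; stepping back towards \<open>\<mu> + i \<nu>\<close> in steps of length \<open>c/2\<close> keeps it onto.\<close>
lemma resolvent_along_vertical_ray:
  fixes T :: "'a::{complex_normed,complete_space} \<Rightarrow> 'a"
  assumes bT: "bounded_clinear T" and "c > 0" and "\<nu> \<noteq> 0"
    and below: "\<And>t x. \<bar>\<nu>\<bar> \<le> \<bar>t\<bar> \<Longrightarrow> c * norm x \<le> norm (T x - scaleC (Complex \<mu> t) x)"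
  shows "Complex \<mu> \<nu> \<notin> cspec T"
proof -
  have lin: "clin T" using bT by (rule bounded_clinear_clin)
  obtain K where "0 \<le> K" and K: "\<And>x. norm (T x) \<le> K * norm x"
    using bounded_clinear_bound[OF bT] by blast
  define t where "t k = \<nu> + sgn \<nu> * (real k * (c/2))" for k :: nat
  have abs_t: "\<bar>t k\<bar> = \<bar>\<nu>\<bar> + real k * (c/2)" for k
  proof -
    have "0 \<le> real k * (c/2)" using \<open>c > 0\<close> by simp
    then show ?thesis using \<open>\<nu> \<noteq> 0\<close> by (cases "\<nu> > 0") (simp_all add: t_def abs_if)
  qed
  then have on_ray: "\<bar>\<nu>\<bar> \<le> \<bar>t k\<bar>" for k using \<open>c > 0\<close> by simp
  define P where "P k \<longleftrightarrow> surj (\<lambda>x. T x - scaleC (Complex \<mu> (t k)) x)" for k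
  obtain n where "K < real n * (c/2)" using reals_Archimedean3[of "c/2"] \<open>c > 0\<close> by auto
  then have "K < cmod (Complex \<mu> (t n))"
    using abs_t[of n] abs_Im_le_cmod[of "Complex \<mu> (t n)"] by simp
  then have "P n" unfolding P_def by (rule surj_shift_large[OF lin \<open>0 \<le> K\<close> K])
  moreover have "P k" if "P (Suc k)" for k
  proof -
    have "cmod (Complex \<mu> (t k) - Complex \<mu> (t (Suc k))) = \<bar>t k - t (Suc k)\<bar>"
      by (simp add: cmod_def)
    also have "t k - t (Suc k) = - sgn \<nu> * (c/2)" by (simp add: t_def algebra_simps)
    also have "\<bar>- sgn \<nu> * (c/2)\<bar> < c" using \<open>\<nu> \<noteq> 0\<close> \<open>c > 0\<close> by (simp add: abs_mult)
    finally have close: "cmod (Complex \<mu> (t k) - Complex \<mu> (t (Suc k))) < c" .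
    have "surj (\<lambda>x. T x - scaleC (Complex \<mu> (t (Suc k))) x)" using that by (simp add: P_def)
    then show ?thesis
      unfolding P_def by (rule surj_shift_nearby[OF lin _ \<open>c > 0\<close> below[OF on_ray] close])
  qed
  ultimately have "P 0" by (rule zero_induct)
  then have "surj (\<lambda>x. T x - scaleC (Complex \<mu> \<nu>) x)" by (simp add: P_def t_def)
  moreover have "c * norm x \<le> norm (T x - scaleC (Complex \<mu> \<nu>) x)" for x
    using below by simp
  ultimately show ?thesis by (rule bounded_below_surj_not_in_cspec[OF lin _ \<open>c > 0\<close>])
qed

subsection \<open>The block operators \<open>V\<close> and \<open>L = A + V\<close>\<close>

lemma blockV_apply [simp]: "blockV B Bs (x0, x1) = (B x1, - Bs x0)"
  by (simp add: blockV_def)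

lemma blockL_apply [simp]: "blockL A0 A1 B Bs (x0, x1) = (A0 x0 + B x1, - Bs x0 + A1 x1)"
  by (simp add: blockL_def)

lemma component_bound_le:
  fixes u :: "'a::real_normed_vector" and v :: "'b::real_normed_vector"
  assumes "0 \<le> K"
  shows "K * norm u \<le> K * norm (u, v)" and "K * norm v \<le> K * norm (u, v)"
  using assms norm_fst_le[of u v] norm_snd_le[of v u] by (auto intro: mult_left_mono)

text \<open>\<open>V\<close> is a bounded (real-)linear map, so its operator norm \<open>onorm\<close> is meaningful.\<close>
lemma bounded_linear_blockV:
  fixes B :: "'b::chilbert \<Rightarrow> 'a::chilbert" and Bs :: "'a \<Rightarrow> 'b"
  assumes bB: "bounded_clinear B" and bBs: "bounded_clinear Bs"
  shows "bounded_linear (blockV B Bs)"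
proof -
  obtain K where "0 \<le> K" and K: "\<And>u. norm (B u) \<le> K * norm u"
    using bounded_clinear_bound[OF bB] by blast
  obtain K' where "0 \<le> K'" and K': "\<And>v. norm (Bs v) \<le> K' * norm v"
    using bounded_clinear_bound[OF bBs] by blast
  have lin: "clin B" "clin Bs" using bB bBs by (auto intro: bounded_clinear_clin)
  show ?thesis
  proof (rule bounded_linear_intro[where K = "K + K'"])
    show "blockV B Bs (x + y) = blockV B Bs x + blockV B Bs y" for x y :: "'a \<times> 'b"
      using lin by (cases x, cases y) (simp add: clin_add)
    show "blockV B Bs (scaleR r x) = scaleR r (blockV B Bs x)" for r and x :: "'a \<times> 'b"
      using lin by (cases x) (simp add: clin_scaleR)
    show "norm (blockV B Bs x) \<le> norm x * (K + K')" for x :: "'a \<times> 'b"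
    proof (cases x)
      case (Pair x0 x1)
      have "norm (B x1, - Bs x0) \<le> norm (B x1) + norm (Bs x0)"
        using norm_Pair_le[of "B x1" "- Bs x0"] by simp
      also have "\<dots> \<le> K * norm (x0, x1) + K' * norm (x0, x1)"
        using K[of x1] K'[of x0] component_bound_le[OF \<open>0 \<le> K\<close>, where u = x0 and v = x1]
          component_bound_le[OF \<open>0 \<le> K'\<close>, where u = x0 and v = x1] by linarith
      finally show ?thesis using Pair by (simp add: algebra_simps)
    qed
  qed
qed

lemma blockV_onorm_bounds:
  fixes B :: "'b::chilbert \<Rightarrow> 'a::chilbert" and Bs :: "'a \<Rightarrow> 'b"
  assumes bB: "bounded_clinear B" and bBs: "bounded_clinear Bs"
  shows "0 \<le> onorm (blockV B Bs)"
    and "norm (B u) \<le> onorm (blockV B Bs) * norm u"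
    and "norm (Bs v) \<le> onorm (blockV B Bs) * norm v"
proof -
  have bV: "bounded_linear (blockV B Bs)" by (rule bounded_linear_blockV[OF bB bBs])
  then show "0 \<le> onorm (blockV B Bs)" by (rule onorm_pos_le)
  have "B 0 = 0" "Bs 0 = 0" using bB bBs by (auto intro: clin_zero bounded_clinear_clin)
  then show "norm (B u) \<le> onorm (blockV B Bs) * norm u"
    and "norm (Bs v) \<le> onorm (blockV B Bs) * norm v"
    using onorm[OF bV, of "(0, u)"] onorm[OF bV, of "(v, 0)"] by simp_all
qed

lemma bounded_clinear_blockL:
  fixes A0 :: "'a::chilbert \<Rightarrow> 'a" and A1 :: "'b::chilbert \<Rightarrow> 'b"
    and B :: "'b \<Rightarrow> 'a" and Bs :: "'a \<Rightarrow> 'b"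
  assumes b0: "bounded_clinear A0" and b1: "bounded_clinear A1"
    and bB: "bounded_clinear B" and bBs: "bounded_clinear Bs"
  shows "bounded_clinear (blockL A0 A1 B Bs)"
proof -
  have lin: "clin A0" "clin A1" "clin B" "clin Bs"
    using assms by (auto intro: bounded_clinear_clin)
  obtain K0 K1 KB KBs where "0 \<le> K0" "0 \<le> K1" "0 \<le> KB" "0 \<le> KBs"
    and K: "\<And>u. norm (A0 u) \<le> K0 * norm u" "\<And>u. norm (A1 u) \<le> K1 * norm u"
      "\<And>u. norm (B u) \<le> KB * norm u" "\<And>u. norm (Bs u) \<le> KBs * norm u"
    using bounded_clinear_bound[OF b0] bounded_clinear_bound[OF b1]
      bounded_clinear_bound[OF bB] bounded_clinear_bound[OF bBs] by metis
  have "norm (blockL A0 A1 B Bs (x0, x1)) \<le> norm (x0, x1) * (K0 + K1 + KB + KBs)" for x0 x1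
  proof -
    have "norm (blockL A0 A1 B Bs (x0, x1))
        \<le> (norm (A0 x0) + norm (B x1)) + (norm (Bs x0) + norm (A1 x1))"
      using norm_Pair_le[of "A0 x0 + B x1" "- Bs x0 + A1 x1"]
        norm_triangle_ineq[of "A0 x0" "B x1"] norm_triangle_ineq[of "- Bs x0" "A1 x1"] by simp
    also have "\<dots> \<le> K0 * norm (x0, x1) + KB * norm (x0, x1) + KBs * norm (x0, x1) + K1 * norm (x0, x1)"
      using K(1)[of x0] K(2)[of x1] K(3)[of x1] K(4)[of x0]
        component_bound_le[OF \<open>0 \<le> K0\<close>, where u = x0 and v = x1] component_bound_le[OF \<open>0 \<le> K1\<close>, where u = x0 and v = x1]
        component_bound_le[OF \<open>0 \<le> KB\<close>, where u = x0 and v = x1] component_bound_le[OF \<open>0 \<le> KBs\<close>, where u = x0 and v = x1]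
      by linarith
    also have "\<dots> = norm (x0, x1) * (K0 + K1 + KB + KBs)" by (simp add: algebra_simps)
    finally show ?thesis .
  qed
  moreover have "blockL A0 A1 B Bs (x + y) = blockL A0 A1 B Bs x + blockL A0 A1 B Bs y" for x y
    using lin by (cases x, cases y) (simp add: clin_add ac_simps)
  moreover have "blockL A0 A1 B Bs (scaleC c x) = scaleC c (blockL A0 A1 B Bs x)" for c x
    using lin by (cases x) (simp add: scaleC_prod_def clin_scaleC scaleC_add_right scaleC_minus_right scaleC_diff_right)
  ultimately show ?thesis unfolding bounded_clinear_def by (metis surj_pair)
qed

text \<open>\<open>L\<close> is \<open>J\<close>-self-adjoint for \<open>J = diag(1, -1)\<close>: the indefinite form
  \<open>[L x, x] = \<langle>x\<^sub>0, (L x)\<^sub>0\<rangle> - \<langle>x\<^sub>1, (L x)\<^sub>1\<rangle>\<close> is real.\<close>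
lemma blockL_J_form_real:
  fixes A0 :: "'a::chilbert \<Rightarrow> 'a" and A1 :: "'b::chilbert \<Rightarrow> 'b"
    and B :: "'b \<Rightarrow> 'a" and Bs :: "'a \<Rightarrow> 'b"
  assumes sa0: "bounded_selfadjoint A0" and sa1: "bounded_selfadjoint A1" and adj: "is_adjoint B Bs"
  shows "Im (cinner u (A0 u + B v) - cinner v (- Bs u + A1 v)) = 0"
proof -
  have "cinner v (Bs u) = cnj (cinner u (B v))"
    using adj by (metis is_adjoint_def cinner_commute)
  moreover have "Im (cinner u (A0 u)) = 0" "Im (cinner v (A1 v)) = 0"
    using symmetric_form_real[OF selfadjoint_symmetric[OF sa0]]
      symmetric_form_real[OF selfadjoint_symmetric[OF sa1]] by (metis Im_complex_of_real)+
  ultimately show ?thesis by (simp add: cinner_simps)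
qed

text \<open>Bound on the imaginary part of the \<open>J\<close>-form of \<open>(L - z) x\<close>: since \<open>[L x, x]\<close> is real,
  \<open>Im [(L - z) x, x] = -Im z (\<parallel>x\<^sub>0\<parallel>\<^sup>2 - \<parallel>x\<^sub>1\<parallel>\<^sup>2)\<close>.\<close>
lemma blockL_imaginary_estimate:
  fixes A0 :: "'a::chilbert \<Rightarrow> 'a" and A1 :: "'b::chilbert \<Rightarrow> 'b"
    and B :: "'b \<Rightarrow> 'a" and Bs :: "'a \<Rightarrow> 'b"
  assumes sa0: "bounded_selfadjoint A0" and sa1: "bounded_selfadjoint A1" and adj: "is_adjoint B Bs"
    and y: "blockL A0 A1 B Bs (u, v) - scaleC (Complex \<mu> t) (u, v) = (y0, y1)"
  shows "\<bar>t\<bar> * \<bar>(norm u)\<^sup>2 - (norm v)\<^sup>2\<bar> \<le> norm u * norm y0 + norm v * norm y1"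
proof -
  have y0: "y0 = A0 u + B v - scaleC (Complex \<mu> t) u"
    and y1: "y1 = - Bs u + A1 v - scaleC (Complex \<mu> t) v"
    using y by (auto simp: scaleC_prod_def)
  have "Im (cinner u y0 - cinner v y1)
      = Im (cinner u (A0 u + B v) - cinner v (- Bs u + A1 v)) - t * ((norm u)\<^sup>2 - (norm v)\<^sup>2)"
    unfolding y0 y1 by (simp add: cinner_simps cinner_self algebra_simps)
  also have "\<dots> = - t * ((norm u)\<^sup>2 - (norm v)\<^sup>2)"
    using blockL_J_form_real[OF sa0 sa1 adj] by simp
  finally have "\<bar>t\<bar> * \<bar>(norm u)\<^sup>2 - (norm v)\<^sup>2\<bar> = \<bar>Im (cinner u y0 - cinner v y1)\<bar>"
    by (simp add: abs_mult)
  also have "\<dots> \<le> cmod (cinner u y0) + cmod (cinner v y1)"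
    using abs_Im_le_cmod norm_triangle_ineq4 order_trans by blast
  also have "\<dots> \<le> norm u * norm y0 + norm v * norm y1"
    by (intro add_mono cinner_cauchy_schwarz)
  finally show ?thesis .
qed

lemma gap_from_imaginary_estimate:
  fixes p q t e w :: real
  assumes "0 \<le> p" "0 \<le> q" "0 \<le> e" "0 \<le> w" "w \<le> \<bar>t\<bar>"
    and im: "\<bar>t\<bar> * \<bar>p\<^sup>2 - q\<^sup>2\<bar> \<le> (p + q) * e"
  shows "w * \<bar>q - p\<bar> \<le> e"
proof (cases "p + q = 0")
  case True
  then have "p = 0" "q = 0" using assms by linarith+
  then show ?thesis using assms by simp
next
  case False
  then have "p + q > 0" using assms by simp
  have "p\<^sup>2 - q\<^sup>2 = (p + q) * (p - q)" by (simp add: power2_eq_square algebra_simps)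
  then have "(p + q) * (\<bar>t\<bar> * \<bar>q - p\<bar>) = \<bar>t\<bar> * \<bar>p\<^sup>2 - q\<^sup>2\<bar>"
    using \<open>p + q > 0\<close> by (simp add: abs_mult abs_minus_commute)
  with im have "(p + q) * (\<bar>t\<bar> * \<bar>q - p\<bar>) \<le> (p + q) * e" by linarith
  then have "\<bar>t\<bar> * \<bar>q - p\<bar> \<le> e" using \<open>p + q > 0\<close> by (rule mult_left_le_imp_le)
  moreover have "w * \<bar>q - p\<bar> \<le> \<bar>t\<bar> * \<bar>q - p\<bar>" using assms by (intro mult_right_mono) auto
  ultimately show ?thesis by linarith
qed

text \<open>The elementary inequality behind the lower bound for \<open>L - z\<close>, for \<open>p \<le> q\<close>: combine
  \<open>d p \<le> m\<^sub>0 p + m\<^sub>1 q \<le> b (p + q) + 2e\<close> with \<open>w (q - p) \<le> e\<close>.\<close>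
lemma two_component_estimate_ordered:
  fixes p q b e m0 m1 w d :: real
  assumes "0 \<le> p" "p \<le> q" "0 \<le> b" "0 \<le> m1" "0 < w" "2*b \<le> d" "d \<le> m0 + m1"
    and diag0: "m0 * p \<le> b*q + e" and diag1: "m1 * q \<le> b*p + e" and gap: "w * (q - p) \<le> e"
  shows "(d - 2*b) * w * (p + q) \<le> (d + 4*w) * e"
proof -
  have "d * p \<le> m0 * p + m1 * q"
    using assms mult_right_mono[of d "m0 + m1" p] mult_left_mono[of p q m1] by (simp add: algebra_simps)
  then have "(d - 2*b) * p \<le> b * (q - p) + 2*e" using diag0 diag1 by (simp add: algebra_simps)
  then have "2*w * ((d - 2*b) * p) \<le> 2*w * (b * (q - p) + 2*e)"
    using \<open>0 < w\<close> by (intro mult_left_mono) auto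
  moreover have "b * (w * (q - p)) \<le> b * e" using gap \<open>0 \<le> b\<close> by (intro mult_left_mono)
  moreover have "(d - 2*b) * (w * (q - p)) \<le> (d - 2*b) * e"
    using gap assms by (intro mult_left_mono) auto
  ultimately show ?thesis by (simp add: algebra_simps)
qed

lemma two_component_estimate:
  fixes p q b e m0 m1 w d :: real
  assumes "0 \<le> p" "0 \<le> q" "0 \<le> b" "0 \<le> m0" "0 \<le> m1" "0 < w" "2*b \<le> d" "d \<le> m0 + m1"
    and "m0 * p \<le> b*q + e" and "m1 * q \<le> b*p + e" and "w * \<bar>q - p\<bar> \<le> e"
  shows "(d - 2*b) * w * (p + q) \<le> (d + 4*w) * e"
proof (cases "p \<le> q")
  case True
  then show ?thesis using assms by (intro two_component_estimate_ordered[of p q b m1 w d m0 e]) auto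
next
  case False
  then have "(d - 2*b) * w * (q + p) \<le> (d + 4*w) * e"
    using assms by (intro two_component_estimate_ordered[of q p b m0 w d m1 e]) auto
  then show ?thesis by (simp add: add.commute)
qed

text \<open>The diagonal blocks give \<open>m\<^sub>i\<parallel>x\<^sub>i\<parallel> \<le> b\<parallel>x\<^sub>j\<parallel> + \<parallel>(L - z)x\<parallel>\<close>
  and the \<open>J\<close>-form shows that \<open>\<parallel>x\<^sub>0\<parallel>\<close> and \<open>\<parallel>x\<^sub>1\<parallel>\<close> are nearly equal.\<close>
lemma blockL_lower_bound:
  fixes A0 :: "'a::chilbert \<Rightarrow> 'a" and A1 :: "'b::chilbert \<Rightarrow> 'b"
    and B :: "'b \<Rightarrow> 'a" and Bs :: "'a \<Rightarrow> 'b"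
  assumes sa0: "bounded_selfadjoint A0" and sa1: "bounded_selfadjoint A1" and adj: "is_adjoint B Bs"
    and bB: "\<And>u. norm (B u) \<le> b * norm u" and bBs: "\<And>v. norm (Bs v) \<le> b * norm v"
    and m0: "\<And>u. m0 * norm u \<le> norm (A0 u - scaleC (complex_of_real \<mu>) u)"
    and m1: "\<And>v. m1 * norm v \<le> norm (A1 v - scaleC (complex_of_real \<mu>) v)"
    and "0 \<le> b" "0 \<le> m0" "0 \<le> m1" "2*b \<le> d" "d \<le> m0 + m1" "0 < w" "w \<le> \<bar>t\<bar>"
  shows "(d - 2*b) * w * norm x \<le> (d + 4*w) * norm (blockL A0 A1 B Bs x - scaleC (Complex \<mu> t) x)"
proof -
  obtain u v where x: "x = (u, v)" by (cases x)
  define z where "z = Complex \<mu> t"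
  obtain y0 y1 where y: "blockL A0 A1 B Bs (u, v) - scaleC z (u, v) = (y0, y1)"
    by (metis surj_pair)
  define e where "e = norm (y0, y1)"
  have "norm y0 \<le> e" "norm y1 \<le> e" unfolding e_def by (rule norm_fst_le, rule norm_snd_le)
  have y0: "A0 u - scaleC z u = y0 - B v" and y1: "A1 v - scaleC z v = y1 + Bs u"
    using y by (auto simp: scaleC_prod_def algebra_simps)
  have diag0: "m0 * norm u \<le> b * norm v + e"
    using m0[of u] selfadjoint_imaginary_shift[OF sa0, of u \<mu> t] y0
      norm_triangle_ineq4[of y0 "B v"] bB[of v] \<open>norm y0 \<le> e\<close> by (simp add: z_def)
  have diag1: "m1 * norm v \<le> b * norm u + e"
    using m1[of v] selfadjoint_imaginary_shift[OF sa1, of v \<mu> t] y1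
      norm_triangle_ineq[of y1 "Bs u"] bBs[of u] \<open>norm y1 \<le> e\<close> by (simp add: z_def)
  have "\<bar>t\<bar> * \<bar>(norm u)\<^sup>2 - (norm v)\<^sup>2\<bar> \<le> norm u * norm y0 + norm v * norm y1"
    using blockL_imaginary_estimate[OF sa0 sa1 adj] y by (simp add: z_def)
  also have "\<dots> \<le> (norm u + norm v) * e"
    using \<open>norm y0 \<le> e\<close> \<open>norm y1 \<le> e\<close> by (simp add: distrib_right add_mono mult_left_mono)
  finally have imag: "\<bar>t\<bar> * \<bar>(norm u)\<^sup>2 - (norm v)\<^sup>2\<bar> \<le> (norm u + norm v) * e" .
  have "0 \<le> e" unfolding e_def by simp
  have gap: "w * \<bar>norm v - norm u\<bar> \<le> e"
    using \<open>0 < w\<close> by (intro gap_from_imaginary_estimate[OF _ _ \<open>0 \<le> e\<close> _ \<open>w \<le> \<bar>t\<bar>\<close> imag]) auto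
  have "(d - 2*b) * w * (norm u + norm v) \<le> (d + 4*w) * e"
    by (rule two_component_estimate[OF _ _ \<open>0 \<le> b\<close> \<open>0 \<le> m0\<close> \<open>0 \<le> m1\<close> \<open>0 < w\<close>
          \<open>2*b \<le> d\<close> \<open>d \<le> m0 + m1\<close> diag0 diag1 gap]) simp_all
  moreover have "(d - 2*b) * w * norm x \<le> (d - 2*b) * w * (norm u + norm v)"
    using \<open>2*b \<le> d\<close> \<open>0 < w\<close> norm_Pair_le[of u v] x by (intro mult_left_mono) auto
  ultimately show ?thesis using x y by (simp add: e_def z_def)
qed

lemma blockL_ray_lower_bound:
  fixes A0 :: "'a::chilbert \<Rightarrow> 'a" and A1 :: "'b::chilbert \<Rightarrow> 'b"
    and B :: "'b \<Rightarrow> 'a" and Bs :: "'a \<Rightarrow> 'b"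
  assumes sa0: "bounded_selfadjoint A0" and sa1: "bounded_selfadjoint A1"
    and bB: "bounded_clinear B" and adj: "is_adjoint B Bs"
    and sep: "setdist (cspec A0) (cspec A1) > 0"
    and small: "onorm (blockV B Bs) < setdist (cspec A0) (cspec A1) / 2"
    and "\<nu> \<noteq> 0"
  obtains c where "c > 0"
    and "\<And>t x. \<bar>\<nu>\<bar> \<le> \<bar>t\<bar> \<Longrightarrow> c * norm x \<le> norm (blockL A0 A1 B Bs x - scaleC (Complex \<mu> t) x)"
proof -
  define d where "d = setdist (cspec A0) (cspec A1)"
  define b where "b = onorm (blockV B Bs)"
  define w where "w = \<bar>\<nu>\<bar>"
  note V_bounds = blockV_onorm_bounds[OF bB adjoint_bounded_clinear[OF bB adj], folded b_def]
  have "2*b < d" "w > 0" using small \<open>\<nu> \<noteq> 0\<close> by (simp_all add: b_def d_def w_def)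
  obtain m0 m1 where "0 \<le> m0" "0 \<le> m1" "d \<le> m0 + m1"
    and m0: "\<And>u. m0 * norm u \<le> norm (A0 u - scaleC (complex_of_real \<mu>) u)"
    and m1: "\<And>v. m1 * norm v \<le> norm (A1 v - scaleC (complex_of_real \<mu>) v)"
    using separated_spectra_lower_bounds[OF sa0 sa1 sep] unfolding d_def by metis
  define c where "c = (d - 2*b) * w / (d + 4*w)"
  have "c > 0" using \<open>2*b < d\<close> \<open>w > 0\<close> V_bounds(1) by (simp add: c_def)
  moreover have "c * norm x \<le> norm (blockL A0 A1 B Bs x - scaleC (Complex \<mu> t) x)"
    if "\<bar>\<nu>\<bar> \<le> \<bar>t\<bar>" for t x
    using blockL_lower_bound[OF sa0 sa1 adj V_bounds(2,3) m0 m1 V_bounds(1) \<open>0 \<le> m0\<close> \<open>0 \<le> m1\<close>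
        _ \<open>d \<le> m0 + m1\<close> \<open>w > 0\<close> that[folded w_def], of x] \<open>2*b < d\<close> \<open>w > 0\<close> V_bounds(1)
    by (simp add: c_def field_simps)
  ultimately show thesis by (rule that)
qed

theorem mainTheorem12:
  fixes A0 :: "'a::chilbert \<Rightarrow> 'a" and A1 :: "'b::chilbert \<Rightarrow> 'b"
    and B :: "'b \<Rightarrow> 'a" and Bs :: "'a \<Rightarrow> 'b"
  assumes "bounded_selfadjoint A0" and "bounded_selfadjoint A1"
    and "bounded_clinear B" and "is_adjoint B Bs"
    and "setdist (cspec A0) (cspec A1) > 0"
    and "onorm (blockV B Bs) < setdist (cspec A0) (cspec A1) / 2"
  shows "cspec (blockL A0 A1 B Bs) \<subseteq> \<real>"
proof
  fix z assume z: "z \<in> cspec (blockL A0 A1 B Bs)"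
  have L_bounded: "bounded_clinear (blockL A0 A1 B Bs)"
    using assms(1-3) adjoint_bounded_clinear[OF assms(3,4)]
    by (simp add: bounded_selfadjoint_def bounded_clinear_blockL)
  show "z \<in> \<real>"
  proof (rule ccontr)
    assume "z \<notin> \<real>"
    then have "Im z \<noteq> 0" by (simp add: complex_is_Real_iff)
    then obtain c where "c > 0" and lower: "\<And>t x. \<bar>Im z\<bar> \<le> \<bar>t\<bar> \<Longrightarrow>
        c * norm x \<le> norm (blockL A0 A1 B Bs x - scaleC (Complex (Re z) t) x)"
      using blockL_ray_lower_bound[OF assms] by metis
    have "Complex (Re z) (Im z) \<notin> cspec (blockL A0 A1 B Bs)"
      by (rule resolvent_along_vertical_ray[OF L_bounded \<open>c > 0\<close> \<open>Im z \<noteq> 0\<close> lower])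
    with z show False by simp
  qed
qed

end
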